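(* Let $n\ge 4$ and let $P_n$ be the path on $n$ vertices with end vertices $u$ and $v$. Then there exists a permutation $\sigma$ of $V(P_n)$ such that: (1) $\sigma$ is a 2-placement of $P_n$; (2) $\sigma(P_n)\subseteq P_n^4$; (3) $dist(u,\sigma(u))=1$ and $dist(v,\sigma(v))\le 1$; (4) every cycle of $\sigma$ has length at most $4$.
   Context: All graphs are finite, simple and undirected; $dist$ denotes the distance in $P_n$. For a graph $G$, a permutation $\sigma$ of $V(G)$ is a 2-placement of $G$ if for every edge $ab\in E(G)$, $\sigma(a)\sigma(b)\notin E(G)$. $G^k$ denotes the $k$-th power of $G$ (same vertex set, distinct vertices adjacent iff their distance in $G$ is at most $k$); $\sigma(G)\subseteq G^k$ means that for every edge $ab$ of $G$, $dist_G(\sigma(a),\sigma(b))\le k$. The cycles of $\sigma$ are those of its disjoint cycle decomposition, fixed points counting as cycles of length $1$. *)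

theory Defs
  imports "HOL-Combinatorics.Permutations"
begin

text \<open>The path P_n: vertex set {0..<n}, edges between consecutive integers.
  End vertices are 0 and n-1.\<close>
definition path_edge :: "nat \<Rightarrow> nat \<Rightarrow> nat \<Rightarrow> bool" where
  "path_edge n a b \<longleftrightarrow> a < n \<and> b < n \<and> (a + 1 = b \<or> b + 1 = a)"

definition path_dist :: "nat \<Rightarrow> nat \<Rightarrow> nat" where
  "path_dist a b = (if a \<le> b then b - a else a - b)"

definition two_placement :: "nat \<Rightarrow> (nat \<Rightarrow> nat) \<Rightarrow> bool" where
  "two_placement n \<sigma> \<longleftrightarrow>
     (\<forall>a b. path_edge n a b \<longrightarrow> \<not> path_edge n (\<sigma> a) (\<sigma> b))"

definition image_in_power :: "nat \<Rightarrow> nat \<Rightarrow> (nat \<Rightarrow> nat) \<Rightarrow> bool" where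
  "image_in_power n k \<sigma> \<longleftrightarrow>
     (\<forall>a b. path_edge n a b \<longrightarrow> path_dist (\<sigma> a) (\<sigma> b) \<le> k)"

definition cycle_len :: "(nat \<Rightarrow> nat) \<Rightarrow> nat \<Rightarrow> nat" where
  "cycle_len \<sigma> x = (LEAST k. 0 < k \<and> (\<sigma> ^^ k) x = x)"

end

theory Submission
  imports Defs
begin

text \<open>Cut the path into consecutive segments of length 4, the last one of length 4 to 7, and
  permute each segment by a fixed pattern. Inside a segment, consecutive vertices go to vertices
  at distance 2 to 4; a pattern starts with 1 and ends within distance 1 of the segment's last
  vertex, so across a boundary the distance is 2 or 3 and the end vertices of the path move by
  at most 1. Every pattern has cycles of length at most 4, and cycles never leave a segment.\<close>

definition good_pattern :: "nat list \<Rightarrow> bool" where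
  "good_pattern p \<longleftrightarrow> p \<noteq> [] \<and> hd p = 1 \<and> length p - 2 \<le> last p
     \<and> (\<forall>i < length p. p ! i < length p)
     \<and> (\<forall>i. Suc i < length p \<longrightarrow> path_dist (p ! i) (p ! Suc i) \<in> {2..4})
     \<and> (\<forall>i < length p. ((!) p ^^ 3) i = i \<or> ((!) p ^^ 4) i = i)"
  \<comment> \<open>the last clause allows exactly the cycle lengths 1, 2, 3, 4\<close>

fun segment_perm :: "nat list list \<Rightarrow> nat \<Rightarrow> nat" where
  "segment_perm [] x = x"
| "segment_perm (p # ps) x =
     (if x < length p then p ! x else length p + segment_perm ps (x - length p))"

abbreviation total_length :: "nat list list \<Rightarrow> nat" where
  "total_length ps \<equiv> sum_list (map length ps)"

lemma path_dist_add_left [simp]: "path_dist (c + x) (c + y) = path_dist x y"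
  unfolding path_dist_def by auto

lemma path_dist_commute: "path_dist x y = path_dist y x"
  unfolding path_dist_def by auto

lemma path_edge_path_dist: "path_edge n a b \<Longrightarrow> path_dist a b = 1"
  unfolding path_edge_def path_dist_def by auto

lemma cycle_len_le:
  assumes "0 < k" "(f ^^ k) x = x"
  shows "cycle_len f x \<le> k"
  unfolding cycle_len_def using assms by (intro Least_le) simp

lemma funpow_mult_fixed: "(f ^^ k) x = x \<Longrightarrow> (f ^^ (k * j)) x = x"
  by (induction j) (simp_all add: funpow_add mult_Suc_right)

lemma funpow_pattern_less:
  assumes "\<forall>i < length p. p ! i < length p" "i < length p"
  shows "((!) p ^^ j) i < length p"
  using assms by (induction j) auto

lemma segment_perm_beyond: "total_length ps \<le> x \<Longrightarrow> segment_perm ps x = x"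
  by (induction ps arbitrary: x) auto

lemma segment_perm_0:
  assumes "ps \<noteq> []" "\<forall>p \<in> set ps. good_pattern p"
  shows "segment_perm ps 0 = 1"
  using assms by (cases ps) (auto simp: good_pattern_def hd_conv_nth)

lemma funpow_segment_perm_head:
  assumes "\<forall>i < length p. p ! i < length p" "x < length p"
  shows "(segment_perm (p # ps) ^^ j) x = ((!) p ^^ j) x"
  using assms funpow_pattern_less[OF assms] by (induction j) auto

lemma funpow_segment_perm_tail:
  assumes "length p \<le> x"
  shows "(segment_perm (p # ps) ^^ j) x = length p + (segment_perm ps ^^ j) (x - length p)"
  using assms by (induction j) auto

lemma segment_perm_cycles:
  assumes "\<forall>p \<in> set ps. good_pattern p"
  shows "(segment_perm ps ^^ 3) x = x \<or> (segment_perm ps ^^ 4) x = x"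
  using assms
proof (induction ps arbitrary: x)
  case Nil
  then show ?case by (simp add: eval_nat_numeral)
next
  case (Cons p ps)
  have p: "good_pattern p" using Cons.prems by simp
  show ?case
  proof (cases "x < length p")
    case True
    have "\<forall>i < length p. p ! i < length p" "((!) p ^^ 3) x = x \<or> ((!) p ^^ 4) x = x"
      using p True by (simp_all add: good_pattern_def)
    then show ?thesis by (simp only: funpow_segment_perm_head True)
  next
    case False
    then have "length p \<le> x" by simp
    with Cons.IH[of "x - length p"] Cons.prems show ?thesis
      unfolding funpow_segment_perm_tail[OF \<open>length p \<le> x\<close>] by auto
  qed
qed

lemma cycle_len_segment_perm:
  assumes "\<forall>p \<in> set ps. good_pattern p"
  shows "cycle_len (segment_perm ps) x \<le> 4"
  using segment_perm_cycles[OF assms, of x] cycle_len_le[of 3] cycle_len_le[of 4] by fastforce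

lemma segment_perm_funpow_12:
  assumes "\<forall>p \<in> set ps. good_pattern p"
  shows "segment_perm ps ^^ 12 = id"
proof
  fix x
  from segment_perm_cycles[OF assms, of x] show "(segment_perm ps ^^ 12) x = id x"
    using funpow_mult_fixed[where k = 3 and j = 4] funpow_mult_fixed[where k = 4 and j = 3] by auto
qed

lemma segment_perm_permutes:
  assumes "\<forall>p \<in> set ps. good_pattern p"
  shows "segment_perm ps permutes {0..<total_length ps}"
proof -
  let ?f = "segment_perm ps"
  have "?f \<circ> ?f ^^ 11 = id" "?f ^^ 11 \<circ> ?f = id"
    using segment_perm_funpow_12[OF assms] by (simp_all flip: funpow_Suc_right funpow.simps)
  then have "bij ?f" by (intro o_bij)
  then show ?thesis
    unfolding permutes_def bij_iff using segment_perm_beyond by auto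
qed

lemma segment_perm_spread:
  assumes "\<forall>p \<in> set ps. good_pattern p" "Suc x < total_length ps"
  shows "path_dist (segment_perm ps x) (segment_perm ps (Suc x)) \<in> {2..4}"
  using assms
proof (induction ps arbitrary: x)
  case Nil
  then show ?case by simp
next
  case (Cons p ps)
  have p: "good_pattern p" using Cons.prems by simp
  consider "Suc x < length p" | "Suc x = length p" | "length p \<le> x" by linarith
  then show ?case
  proof cases
    case 1
    then show ?thesis using p by (simp add: good_pattern_def)
  next
    case 2
    then have "ps \<noteq> []" using Cons.prems by auto
    then have "segment_perm (p # ps) (Suc x) = length p + 1"
      using 2 Cons.prems segment_perm_0 by simp
    moreover have "x = length p - 1" using 2 by simp
    then have "segment_perm (p # ps) x = last p" "length p - 2 \<le> last p" "last p < length p"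
      using p by (auto simp: good_pattern_def last_conv_nth)
    ultimately show ?thesis by (auto simp: path_dist_def)
  next
    case 3
    then have "Suc x - length p = Suc (x - length p)" by simp
    then show ?thesis using 3 Cons by auto
  qed
qed

lemma segment_perm_last:
  assumes "ps \<noteq> []" "\<forall>p \<in> set ps. good_pattern p"
  shows "path_dist (total_length ps - 1) (segment_perm ps (total_length ps - 1)) \<le> 1"
  using assms
proof (induction ps)
  case Nil
  then show ?case by simp
next
  case (Cons p ps)
  have p: "good_pattern p" using Cons.prems by simp
  show ?case
  proof (cases "ps = []")
    case True
    then have "segment_perm [p] (length p - 1) = last p" "length p - 2 \<le> last p" "last p < length p"
      using p by (auto simp: good_pattern_def last_conv_nth)
    then show ?thesis using True by (auto simp: path_dist_def)
  next
    case False
    then have "0 < total_length ps"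
      using Cons.prems by (cases ps) (auto simp: good_pattern_def)
    then have "total_length (p # ps) - 1 = length p + (total_length ps - 1)" by simp
    then show ?thesis using Cons False by (simp del: sum_list_simps list.map)
  qed
qed

lemma segment_perm_path_edge:
  assumes "\<forall>p \<in> set ps. good_pattern p" "path_edge (total_length ps) a b"
  shows "path_dist (segment_perm ps a) (segment_perm ps b) \<in> {2..4}"
  using assms(2) segment_perm_spread[OF assms(1)] path_dist_commute
  unfolding path_edge_def by (metis Suc_eq_plus1)

definition segment_pattern :: "nat \<Rightarrow> nat list" where
  "segment_pattern r = (if r = 0 then [1,3,0,2] else if r = 1 then [1,3,0,2,4]
     else if r = 2 then [1,4,2,0,3,5] else [1,3,6,4,0,2,5])"

lemma good_pattern_segment_pattern: "good_pattern (segment_pattern r)"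
  by (simp add: good_pattern_def segment_pattern_def forall_less_iff lessThan_Suc path_dist_def
      numeral_eq_Suc)

lemma length_segment_pattern: "r < 4 \<Longrightarrow> length (segment_pattern r) = r + 4"
  by (auto simp: segment_pattern_def)

definition path_segments :: "nat \<Rightarrow> nat list list" where
  "path_segments n = replicate (n div 4 - 1) (segment_pattern 0) @ [segment_pattern (n mod 4)]"

lemma good_pattern_path_segments: "\<forall>p \<in> set (path_segments n). good_pattern p"
  by (simp add: path_segments_def good_pattern_segment_pattern)

lemma total_length_path_segments:
  assumes "4 \<le> n"
  shows "total_length (path_segments n) = n"
proof -
  have "total_length (path_segments n) = (n div 4 - 1) * 4 + (n mod 4 + 4)"
    by (simp add: path_segments_def length_segment_pattern sum_list_replicate)
  also have "\<dots> = n" using assms by (simp add: algebra_simps)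
  finally show ?thesis .
qed

theorem theorem1p6:
  fixes n :: nat
  assumes "n \<ge> 4"
  shows "\<exists>\<sigma>. \<sigma> permutes {0..<n}
           \<and> two_placement n \<sigma>
           \<and> image_in_power n 4 \<sigma>
           \<and> path_dist 0 (\<sigma> 0) = 1 \<and> path_dist (n - 1) (\<sigma> (n - 1)) \<le> 1
           \<and> (\<forall>x \<in> {0..<n}. cycle_len \<sigma> x \<le> 4)"
proof (intro exI conjI)
  let ?ps = "path_segments n"
  have good: "\<forall>p \<in> set ?ps. good_pattern p" by (rule good_pattern_path_segments)
  have nonempty: "?ps \<noteq> []" by (simp add: path_segments_def)
  have n: "total_length ?ps = n" using assms by (rule total_length_path_segments)
  have edge: "path_dist (segment_perm ?ps a) (segment_perm ?ps b) \<in> {2..4}" if "path_edge n a b" for a b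
    using segment_perm_path_edge[OF good] that n by simp
  show "segment_perm ?ps permutes {0..<n}" using segment_perm_permutes[OF good] n by simp
  show "two_placement n (segment_perm ?ps)"
    unfolding two_placement_def using edge path_edge_path_dist by fastforce
  show "image_in_power n 4 (segment_perm ?ps)"
    unfolding image_in_power_def using edge by simp
  show "path_dist 0 (segment_perm ?ps 0) = 1"
    using segment_perm_0[OF nonempty good] by (simp add: path_dist_def)
  show "path_dist (n - 1) (segment_perm ?ps (n - 1)) \<le> 1"
    using segment_perm_last[OF nonempty good] n by simp
  show "\<forall>x \<in> {0..<n}. cycle_len (segment_perm ?ps) x \<le> 4"
    using cycle_len_segment_perm[OF good] by simp
qed

end
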